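(* Let $h>0$ and $J>0$ with $\lambda=J/h<8/9$ (i.e. $\lambda\lesssim 0.89$), let $\Gamma_{abs}>0$ and $\Gamma^x_{dph}>0$. Consider the two-qubit battery Hamiltonian $H_B$ and initial state $\rho_0$ described in the context, and for $\Gamma\ge 0$ let $\rho^{(\Gamma)}_t$ be the solution of the master equation $$\frac{d\rho}{dt}=-i[H_B,\rho]+\Gamma_{abs}\sum_{j=1}^{2}\Big(\sigma^+_j\rho\,\sigma^-_j-\tfrac12\{\sigma^-_j\sigma^+_j,\rho\}\Big)+\Gamma\sum_{j=1}^{2}\big(\sigma^x_j\rho\,\sigma^x_j-\rho\big),\qquad \rho(0)=\rho_0 .$$ Define the work gained $W_\Gamma(t)=\mathrm{Tr}(H_B\rho^{(\Gamma)}_t)-\mathrm{Tr}(H_B\rho_0)$. Then, in the transient regime, the work gained with local bit-flip noise exceeds the work gained without noise: there exists $t^*>0$ such that $W_{\Gamma^x_{dph}}(t)>W_0(t)$ for all $0<t<t^*$.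
   Context: Two qubits with computational basis $|00\rangle,|01\rangle,|10\rangle,|11\rangle$, where $\sigma^z|0\rangle=|0\rangle$, $\sigma^z|1\rangle=-|1\rangle$. $\sigma^x,\sigma^y,\sigma^z$ are the Pauli matrices, $\sigma^{\pm}=(\sigma^x\pm i\sigma^y)/2$, and $\sigma^a_1=\sigma^a\otimes I$, $\sigma^a_2=I\otimes\sigma^a$. The battery Hamiltonian (two-spin transverse Ising model) is, in the computational basis, $$H_B=\begin{pmatrix} h&0&0&J/4\\ 0&0&J/4&0\\ 0&J/4&0&0\\ J/4&0&0&-h\end{pmatrix}.$$ Set $e_0=-\sqrt{h^2+\tfrac{5J^2}{8}}$, $p=\frac{4(h+e_0)}{J}$, and let the initial state be $$\rho_0=\frac{1}{1+p^2}\begin{pmatrix} p^2&0&0&p\\ 0&0&0&0\\ 0&0&0&0\\ p&0&0&1\end{pmatrix}.$$ The terms with $\Gamma_{abs}$ model a local bosonic reservoir charging each spin (absorption channel); the terms with $\Gamma$ model local bit-flip (dephasing along $x$) noise on each spin; $\Gamma=0$ is the noiseless case. *)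

theory Defs
  imports "HOL-Analysis.Analysis"
begin

text \<open>Single-qubit index: False = |0>, True = |1>.  Two-qubit index: pairs (a,b) = |ab>,
  so sigma_1 = sigma (x) I acts on the first component.\<close>

type_synonym qmat = "complex^bool^bool"
type_synonym mat2q = "complex^(bool \<times> bool)^(bool \<times> bool)"

definition qbit_idx :: "bool \<Rightarrow> nat" where "qbit_idx b = (if b then 1 else 0)"

definition idx4 :: "bool \<times> bool \<Rightarrow> nat" where
  "idx4 ab = 2 * qbit_idx (fst ab) + qbit_idx (snd ab)"

definition mat2_of_list :: "complex list list \<Rightarrow> qmat" where
  "mat2_of_list M = (\<chi> i j. M ! qbit_idx i ! qbit_idx j)"

definition mat4_of_list :: "complex list list \<Rightarrow> mat2q" where
  "mat4_of_list M = (\<chi> i j. M ! idx4 i ! idx4 j)"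

definition smult_mat :: "complex \<Rightarrow> complex^'n^'m \<Rightarrow> complex^'n^'m" where
  "smult_mat c M = (\<chi> i j. c * M $ i $ j)"

definition kron :: "qmat \<Rightarrow> qmat \<Rightarrow> mat2q" where
  "kron A B = (\<chi> i j. A $ fst i $ fst j * B $ snd i $ snd j)"

definition pauli_x :: qmat where "pauli_x = mat2_of_list [[0, 1], [1, 0]]"
definition pauli_y :: qmat where "pauli_y = mat2_of_list [[0, -\<i>], [\<i>, 0]]"
definition pauli_z :: qmat where "pauli_z = mat2_of_list [[1, 0], [0, -1]]"
definition id2 :: qmat where "id2 = mat 1"

definition sigma_plus :: qmat where
  "sigma_plus = smult_mat (1/2) (pauli_x + smult_mat \<i> pauli_y)"
definition sigma_minus :: qmat where
  "sigma_minus = smult_mat (1/2) (pauli_x - smult_mat \<i> pauli_y)"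

definition site :: "nat \<Rightarrow> qmat \<Rightarrow> mat2q" where
  "site j s = (if j = 1 then kron s id2 else kron id2 s)"

definition H_B :: "real \<Rightarrow> real \<Rightarrow> mat2q" where
  "H_B h J = mat4_of_list
     [[of_real h, 0, 0, of_real (J/4)],
      [0, 0, of_real (J/4), 0],
      [0, of_real (J/4), 0, 0],
      [of_real (J/4), 0, 0, of_real (-h)]]"

definition e0 :: "real \<Rightarrow> real \<Rightarrow> real" where
  "e0 h J = - sqrt (h^2 + 5 * J^2 / 8)"

definition pp :: "real \<Rightarrow> real \<Rightarrow> real" where
  "pp h J = 4 * (h + e0 h J) / J"

definition rho0 :: "real \<Rightarrow> real \<Rightarrow> mat2q" where
  "rho0 h J = smult_mat (of_real (1 / (1 + (pp h J)^2)))
     (mat4_of_list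
      [[of_real ((pp h J)^2), 0, 0, of_real (pp h J)],
       [0, 0, 0, 0],
       [0, 0, 0, 0],
       [of_real (pp h J), 0, 0, 1]])"

definition commutator :: "mat2q \<Rightarrow> mat2q \<Rightarrow> mat2q" where
  "commutator A B = A ** B - B ** A"

definition anticommutator :: "mat2q \<Rightarrow> mat2q \<Rightarrow> mat2q" where
  "anticommutator A B = A ** B + B ** A"

definition lindblad :: "real \<Rightarrow> real \<Rightarrow> real \<Rightarrow> real \<Rightarrow> mat2q \<Rightarrow> mat2q" where
  "lindblad h J Gabs G \<rho> =
     smult_mat (-\<i>) (commutator (H_B h J) \<rho>)
   + smult_mat (of_real Gabs)
       (\<Sum>j\<in>{1,2::nat}. site j sigma_plus ** \<rho> ** site j sigma_minus
          - smult_mat (1/2) (anticommutator (site j sigma_minus ** site j sigma_plus) \<rho>))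
   + smult_mat (of_real G)
       (\<Sum>j\<in>{1,2::nat}. site j pauli_x ** \<rho> ** site j pauli_x - \<rho>)"

definition is_solution :: "real \<Rightarrow> real \<Rightarrow> real \<Rightarrow> real \<Rightarrow> (real \<Rightarrow> mat2q) \<Rightarrow> bool" where
  "is_solution h J Gabs G \<rho> \<longleftrightarrow>
     \<rho> 0 = rho0 h J \<and>
     (\<forall>t\<ge>0. (\<rho> has_vector_derivative lindblad h J Gabs G (\<rho> t)) (at t within {0..}))"

definition work :: "real \<Rightarrow> real \<Rightarrow> (real \<Rightarrow> mat2q) \<Rightarrow> real \<Rightarrow> complex" where
  "work h J \<rho> t = trace (H_B h J ** \<rho> t) - trace (H_B h J ** rho0 h J)"

end

theory Submission
  imports Defs
begin

text \<open>Both solutions start at \<open>\<rho>\<^sub>0\<close>, so the difference of the works vanishes at \<open>t = 0\<close>.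
  The two generators differ only by the bit-flip term \<open>\<Gamma> N\<close>, so the right derivative of the
  difference at \<open>0\<close> is \<open>\<Gamma> Tr(H\<^sub>B N(\<rho>\<^sub>0)) = 2h\<Gamma>(1 - p\<^sup>2)/(1 + p\<^sup>2)\<close>, which is positive
  because \<open>9J < 8h\<close> forces \<open>-1 < p < 0\<close>. A positive right derivative at a zero makes the
  difference positive on some interval \<open>(0, t\<^sup>*)\<close>.\<close>

definition energy :: "real \<Rightarrow> real \<Rightarrow> mat2q \<Rightarrow> real" where
  "energy h J M = Re (trace (H_B h J ** M))"

definition bit_flip_dissipator :: "mat2q \<Rightarrow> mat2q" where
  "bit_flip_dissipator \<rho> = (\<Sum>j\<in>{1,2::nat}. site j pauli_x ** \<rho> ** site j pauli_x - \<rho>)"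

lemma bounded_linear_energy: "bounded_linear (energy h J)"
proof -
  have "linear (energy h J)"
    by (rule linearI)
      (simp_all add: energy_def trace_def matrix_matrix_mult_def sum.distrib sum_distrib_left
         algebra_simps)
  then show ?thesis
    by (simp add: linear_conv_bounded_linear)
qed

lemma energy_add: "energy h J (A + B) = energy h J A + energy h J B"
  by (simp add: energy_def matrix_add_ldistrib trace_add)

lemma energy_smult_of_real: "energy h J (smult_mat (of_real c) M) = c * energy h J M"
  by (simp add: energy_def smult_mat_def trace_def matrix_matrix_mult_def sum_distrib_left
     algebra_simps)

lemma Re_work_eq_energy_diff: "Re (work h J \<rho> t) = energy h J (\<rho> t) - energy h J (rho0 h J)"
  by (simp add: work_def energy_def)

lemma energy_has_derivative_at_0:
  assumes "is_solution h J Gabs G \<rho>"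
  shows "((\<lambda>t. energy h J (\<rho> t)) has_real_derivative energy h J (lindblad h J Gabs G (rho0 h J)))
           (at 0 within {0..})"
proof -
  have "(\<rho> has_vector_derivative lindblad h J Gabs G (rho0 h J)) (at 0 within {0..})"
    using assms unfolding is_solution_def by auto
  from bounded_linear.has_vector_derivative[OF bounded_linear_energy this]
  show ?thesis
    by (simp add: has_real_derivative_iff_has_vector_derivative)
qed

lemma lindblad_eq_noiseless_plus_bit_flip:
  "lindblad h J Gabs G \<rho> = lindblad h J Gabs 0 \<rho> + smult_mat (of_real G) (bit_flip_dissipator \<rho>)"
  by (simp add: vec_eq_iff lindblad_def smult_mat_def bit_flip_dissipator_def)

lemma UNIV_bool_prod: "(UNIV :: (bool \<times> bool) set) = {(False,False),(False,True),(True,False),(True,True)}"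
  by auto

lemma energy_bit_flip_dissipator_rho0:
  "energy h J (bit_flip_dissipator (rho0 h J)) = 2 * h * (1 - (pp h J)^2) / (1 + (pp h J)^2)"
  by (simp add: energy_def bit_flip_dissipator_def trace_def matrix_matrix_mult_def site_def kron_def
      pauli_x_def mat2_of_list_def mat4_of_list_def H_B_def rho0_def smult_mat_def id2_def mat_def
      idx4_def qbit_idx_def UNIV_bool_prod UNIV_bool)
    (simp add: diff_divide_distrib right_diff_distrib mult_ac)

lemma pp_squared_less_one:
  assumes "h > 0" "J > 0" "9 * J < 8 * h"
  shows "(pp h J)^2 < 1"
proof -
  define s where "s = sqrt (h^2 + 5 * J^2 / 8)"
  have s_sq: "s^2 = h^2 + 5 * J^2 / 8" and "s \<ge> 0"
    by (simp_all add: s_def)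
  have "h^2 < s^2"
    using assms(2) by (simp add: s_sq)
  then have "h < s"
    using \<open>s \<ge> 0\<close> by (rule power2_less_imp_less)
  have "9 * J^2 < 8 * h * J"
    using mult_strict_left_mono[OF assms(3,2)] by (simp add: power2_eq_square mult_ac)
  then have "s^2 < (h + J/4)^2"
    unfolding s_sq by (simp add: power2_sum power_divide mult_ac)
  then have "s < h + J/4"
    by (rule power2_less_imp_less) (use assms(1,2) in simp)
  have pp_eq: "pp h J = 4 * (h - s) / J"
    by (simp add: pp_def e0_def s_def)
  have "-1 < pp h J" "pp h J < 0"
    unfolding pp_eq using \<open>h < s\<close> \<open>s < h + J/4\<close> assms(2) by (simp_all add: field_simps)
  then show ?thesis
    by (simp add: abs_square_less_1)
qed

theorem theorem2:
  fixes h J Gabs Gdph :: real and \<rho>dph \<rho>free :: "real \<Rightarrow> mat2q"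
  assumes "h > 0" and "J > 0" and "J / h < 8/9"
    and "Gabs > 0" and "Gdph > 0"
    and "is_solution h J Gabs Gdph \<rho>dph"
    and "is_solution h J Gabs 0 \<rho>free"
  shows "\<exists>tstar > 0. \<forall>t. 0 < t \<and> t < tstar \<longrightarrow>
           Re (work h J \<rho>dph t) > Re (work h J \<rho>free t)"
proof -
  define D where "D t = energy h J (\<rho>dph t) - energy h J (\<rho>free t)" for t
  have D_0: "D 0 = 0"
    using assms(6,7) by (simp add: D_def is_solution_def)
  have "(D has_real_derivative Gdph * energy h J (bit_flip_dissipator (rho0 h J))) (at 0 within {0..})"
    unfolding D_def
    using DERIV_diff[OF energy_has_derivative_at_0[OF assms(6)] energy_has_derivative_at_0[OF assms(7)]]
    by (simp add: lindblad_eq_noiseless_plus_bit_flip[of h J Gabs Gdph] energy_add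
        energy_smult_of_real)
  moreover have "(pp h J)^2 < 1"
    using assms(1-3) by (intro pp_squared_less_one) (simp_all add: divide_less_eq)
  then have "Gdph * energy h J (bit_flip_dissipator (rho0 h J)) > 0"
    using assms(1,5) by (simp add: energy_bit_flip_dissipator_rho0 add_pos_nonneg)
  ultimately obtain d where "d > 0" and "\<forall>t>0. t < d \<longrightarrow> D 0 < D t"
    using has_real_derivative_pos_inc_right by fastforce
  then show ?thesis
    using D_0 by (auto simp: D_def Re_work_eq_energy_diff)
qed

end
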